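(* Let $n\ge 5$ and let $X$ be a nonempty set of Latin squares of order $n$ such that for every $L\in X$ and every permutation $\sigma$ of $[1,n]$, the square $\sigma(L)$ also lies in $X$. Let $m$ be the maximum inner distance of a square in $X$. Then for every integer $k\in[1,m]$ there exists a square in $X$ of inner distance $k$.
   Context: Symbols are $[1,n]=\{1,\dots,n\}$. For $a,b\in[1,n]$, $\mathrm{dist}(a,b)$ is the minimum of the residues of $a-b$ and $b-a$ modulo $n$ (in $[0,n-1]$). A Latin square of order $n$ is an $n\times n$ matrix with entries in $[1,n]$ in which every row and column contains each symbol exactly once. Cells are adjacent if they share an edge horizontally or vertically; the inner distance of a Latin square is the minimum of $\mathrm{dist}$ over symbols in adjacent cells. For a permutation $\sigma$ of $[1,n]$, $\sigma(L)$ is the square whose $(i,j)$ entry is $\sigma(m_{i,j})$. *)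

theory Defs
  imports Main "HOL-Combinatorics.Permutations"
begin

text \<open>A Latin square of order n is represented as a function
  L :: nat => nat => nat, where L i j is the entry in row i, column j for
  i, j in {1..n}; outside this range the function is required to be 0 so that
  squares are determined by their n x n entries.\<close>

definition cdist :: "nat \<Rightarrow> nat \<Rightarrow> nat \<Rightarrow> nat" where
  "cdist n a b = nat (min ((int a - int b) mod int n) ((int b - int a) mod int n))"

definition latin_square :: "nat \<Rightarrow> (nat \<Rightarrow> nat \<Rightarrow> nat) \<Rightarrow> bool" where
  "latin_square n L \<longleftrightarrow>
     (\<forall>i j. (i \<notin> {1..n} \<or> j \<notin> {1..n}) \<longrightarrow> L i j = 0) \<and>
     (\<forall>i\<in>{1..n}. bij_betw (\<lambda>j. L i j) {1..n} {1..n}) \<and>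
     (\<forall>j\<in>{1..n}. bij_betw (\<lambda>i. L i j) {1..n} {1..n})"

definition adjacent_cells :: "nat \<Rightarrow> ((nat \<times> nat) \<times> (nat \<times> nat)) set" where
  "adjacent_cells n = {((i, j), (i', j')). i \<in> {1..n} \<and> j \<in> {1..n} \<and> i' \<in> {1..n} \<and> j' \<in> {1..n} \<and>
       ((i = i' \<and> (j' = j + 1 \<or> j = j' + 1)) \<or> (j = j' \<and> (i' = i + 1 \<or> i = i' + 1)))}"

definition inner_distance :: "nat \<Rightarrow> (nat \<Rightarrow> nat \<Rightarrow> nat) \<Rightarrow> nat" where
  "inner_distance n L = Min ((\<lambda>((i, j), (i', j')). cdist n (L i j) (L i' j')) ` adjacent_cells n)"

definition perm_square :: "nat \<Rightarrow> (nat \<Rightarrow> nat) \<Rightarrow> (nat \<Rightarrow> nat \<Rightarrow> nat) \<Rightarrow> (nat \<Rightarrow> nat \<Rightarrow> nat)" where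
  "perm_square n \<sigma> L = (\<lambda>i j. if i \<in> {1..n} \<and> j \<in> {1..n} then \<sigma> (L i j) else 0)"

end

theory Submission
  imports Defs
begin

(* Take L in X of maximal inner distance m, and adjacent cells of L carrying symbols a, b with
   dist(a, b) = m. For 1 \<le> k \<le> m choose a symbol v on a shortest arc from a to b with
   dist(a, v) = m - k and dist(v, b) = k, and swap the symbols a and v. The swap moves every symbol
   by at most m - k, and it moves both symbols of a pair only if the pair is {a, v}, whose distance
   it preserves; so by the triangle inequality every adjacent pair keeps distance at least k, while
   the pair (a, b) becomes (v, b), at distance exactly k. *)

definition circ_norm :: "int \<Rightarrow> int \<Rightarrow> int" where
  "circ_norm n z = min (z mod n) ((- z) mod n)"

lemma cdist_eq_circ_norm: "cdist n a b = nat (circ_norm (int n) (int a - int b))"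
  unfolding cdist_def circ_norm_def by (simp add: min.commute)

lemma circ_norm_nonneg: "n > 0 \<Longrightarrow> 0 \<le> circ_norm n z"
  unfolding circ_norm_def by simp

lemma circ_norm_le_half: "n > 0 \<Longrightarrow> 2 * circ_norm n z \<le> n"
  unfolding circ_norm_def
  using pos_mod_sign[of n z] pos_mod_bound[of n z] by (auto simp: zmod_zminus1_eq_if min_def)

lemma circ_norm_cong: "n dvd z - w \<Longrightarrow> circ_norm n z = circ_norm n w"
  unfolding circ_norm_def by (metis mod_eq_dvd_iff mod_minus_eq)

lemma circ_norm_uminus: "circ_norm n (- z) = circ_norm n z"
  unfolding circ_norm_def by (simp add: min.commute)

lemma circ_norm_le_abs:
  assumes "n > 0" "n dvd z - w"
  shows "circ_norm n z \<le> \<bar>w\<bar>"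
proof (cases "w \<ge> 0")
  case True
  have "circ_norm n z \<le> w mod n"
    using assms(2) unfolding circ_norm_def by (simp add: mod_eq_dvd_iff[symmetric])
  also have "\<dots> \<le> w" using True assms(1) by (simp add: zmod_le_nonneg_dividend)
  finally show ?thesis using True by simp
next
  case False
  have "circ_norm n z \<le> (- w) mod n"
    using assms(2) unfolding circ_norm_def by (metis min.cobounded2 mod_eq_dvd_iff mod_minus_eq)
  also have "\<dots> \<le> - w" using False assms(1) by (simp add: zmod_le_nonneg_dividend)
  finally show ?thesis using False by simp
qed

lemma circ_norm_attained:
  assumes "n > 0"
  obtains w where "n dvd z - w" "\<bar>w\<bar> = circ_norm n z"
proof (cases "z mod n \<le> (- z) mod n")
  case True
  have "n dvd z - z mod n" by (simp add: mod_eq_dvd_iff[symmetric])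
  then show ?thesis using True assms by (intro that[of "z mod n"]) (simp_all add: circ_norm_def)
next
  case False
  have "n dvd (- z) - (- z) mod n" by (simp add: mod_eq_dvd_iff[symmetric])
  then have "n dvd - ((- z) - (- z) mod n)" by (simp only: dvd_minus_iff)
  then have "n dvd z - (- ((- z) mod n))" by (simp add: algebra_simps)
  then show ?thesis using False assms by (intro that[of "- ((- z) mod n)"]) (simp_all add: circ_norm_def)
qed

lemma circ_norm_add_le:
  assumes "n > 0"
  shows "circ_norm n (x + y) \<le> circ_norm n x + circ_norm n y"
proof -
  obtain x' where x': "n dvd x - x'" "\<bar>x'\<bar> = circ_norm n x" using circ_norm_attained assms by blast
  obtain y' where y': "n dvd y - y'" "\<bar>y'\<bar> = circ_norm n y" using circ_norm_attained assms by blast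
  have "n dvd (x + y) - (x' + y')"
    using dvd_add[OF x'(1) y'(1)] by (simp add: algebra_simps)
  then have "circ_norm n (x + y) \<le> \<bar>x' + y'\<bar>" using circ_norm_le_abs assms by blast
  then show ?thesis using x'(2) y'(2) by linarith
qed

lemma circ_norm_nonneg_small:
  assumes "0 \<le> t" "2 * t \<le> n"
  shows "circ_norm n t = t"
proof (cases "t = 0")
  case False
  then have "0 < t" "t < n" using assms by linarith+
  then have "t mod n = t" "(- t) mod n = n - t" by (simp_all add: zmod_zminus1_eq_if)
  then show ?thesis using assms unfolding circ_norm_def by simp
qed (simp add: circ_norm_def)

lemma circ_norm_small: "2 * \<bar>t\<bar> \<le> n \<Longrightarrow> circ_norm n t = \<bar>t\<bar>"
  using circ_norm_nonneg_small[of "\<bar>t\<bar>" n] circ_norm_uminus[of n t] by (cases "t \<ge> 0") simp_all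

lemma cdist_commute: "cdist n a b = cdist n b a"
  unfolding cdist_def by (simp add: min.commute)

lemma cdist_self: "cdist n a a = 0"
  unfolding cdist_def by simp

lemma cdist_le_half: "n > 0 \<Longrightarrow> 2 * cdist n a b \<le> n"
  unfolding cdist_eq_circ_norm using circ_norm_le_half[of "int n" "int a - int b"] by simp

lemma cdist_triangle:
  assumes "n > 0"
  shows "cdist n x z \<le> cdist n x y + cdist n y z"
proof -
  have "circ_norm (int n) (int x - int z)
          \<le> circ_norm (int n) (int x - int y) + circ_norm (int n) (int y - int z)"
    using circ_norm_add_le[of "int n" "int x - int y" "int y - int z"] assms by simp
  then show ?thesis
    unfolding cdist_eq_circ_norm using circ_norm_nonneg[of "int n"] assms
    by (simp add: nat_add_distrib[symmetric])
qed

lemma exists_residue_atLeastAtMost: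
  assumes "n > 0"
  obtains v where "v \<in> {1..n}" "int n dvd int v - z"
proof
  define r where "r = (z - 1) mod int n"
  have r: "0 \<le> r" "r < int n" using assms unfolding r_def by simp_all
  show "nat (r + 1) \<in> {1..n}" using r by auto
  have "int n dvd (z - 1) - r" unfolding r_def by (simp add: mod_eq_dvd_iff[symmetric])
  then show "int n dvd int (nat (r + 1)) - z"
    using r by (simp add: dvd_diff_commute algebra_simps)
qed

lemma cdist_intermediate_point:
  assumes "n > 0" "k \<le> cdist n a b"
  obtains v where "v \<in> {1..n}" "cdist n a v = cdist n a b - k" "cdist n v b = k"
proof -
  define N M where "N = int n" and "M = cdist n a b"
  have N: "N > 0" and M: "2 * int M \<le> N"
    using assms cdist_le_half[of n a b] unfolding N_def M_def by simp_all
  have "circ_norm N (int b - int a) = int M"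
    using cdist_commute[of n a b] circ_norm_nonneg[OF N]
    unfolding M_def N_def cdist_eq_circ_norm by simp
  then obtain z where z: "N dvd int b - int a - z" "\<bar>z\<bar> = int M"
    using circ_norm_attained[OF N] by metis
  obtain e :: int where e: "\<bar>e\<bar> = 1" "z = e * int M"
    using z(2) by (cases "z \<ge> 0") (auto intro: that[of 1] that[of "-1"])
  \<comment> \<open>b is congruent to a + z, and v will be congruent to a + s, a point of the segment from a to a + z\<close>
  define s where "s = e * (int M - int k)"
  obtain v where v: "v \<in> {1..n}" "N dvd int v - (int a + s)"
    using exists_residue_atLeastAtMost[OF assms(1)] unfolding N_def by metis
  have abs_s: "\<bar>s\<bar> = int M - int k" "2 * \<bar>s\<bar> \<le> N"
    using e(1) assms(2) M unfolding s_def M_def by (simp_all add: abs_mult)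
  have "N dvd (int a - int v) - (- s)"
    using v(2) by (simp add: dvd_diff_commute algebra_simps)
  then have "circ_norm N (int a - int v) = circ_norm N (- s)" by (rule circ_norm_cong)
  also have "\<dots> = int M - int k" using circ_norm_small[of "- s" N] abs_s by simp
  finally have av: "cdist n a v = M - k" by (simp add: cdist_eq_circ_norm N_def)
  have "N dvd (int v - int b) - (- e * int k)"
    using dvd_diff[OF v(2) z(1)] e(2) unfolding s_def by (simp add: algebra_simps)
  then have "circ_norm N (int v - int b) = circ_norm N (- e * int k)" by (rule circ_norm_cong)
  also have "\<dots> = int k"
    using circ_norm_small[of "- e * int k" N] e(1) M assms(2) unfolding M_def by (simp add: abs_mult)
  finally have vb: "cdist n v b = k" by (simp add: cdist_eq_circ_norm N_def)
  show ?thesis using that v(1) av vb unfolding M_def by blast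
qed

lemma cdist_transpose_ge:
  assumes "n > 0" "cdist n a v + k \<le> cdist n x y"
  shows "k \<le> cdist n (transpose a v x) (transpose a v y)"
proof -
  let ?\<tau> = "transpose a v"
  have moved: "cdist n z (?\<tau> z) \<le> cdist n a v" for z
    by (cases "z = a"; cases "z = v") (simp_all add: cdist_self cdist_commute)
  consider "x \<in> {a, v}" "y \<in> {a, v}" | "x \<notin> {a, v}" | "y \<notin> {a, v}" by blast
  then show ?thesis
  proof cases
    case 1
    then have "cdist n (?\<tau> x) (?\<tau> y) = cdist n x y" by (auto simp: cdist_self cdist_commute)
    then show ?thesis using assms(2) by simp
  next
    case 2
    have "cdist n x y \<le> cdist n x (?\<tau> y) + cdist n (?\<tau> y) y" by (rule cdist_triangle[OF assms(1)])
    then show ?thesis using 2 moved[of y] assms(2) by (simp add: cdist_commute)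
  next
    case 3
    have "cdist n x y \<le> cdist n x (?\<tau> x) + cdist n (?\<tau> x) y" by (rule cdist_triangle[OF assms(1)])
    then show ?thesis using 3 moved[of x] assms(2) by simp
  qed
qed

lemma finite_adjacent_cells: "finite (adjacent_cells n)"
proof (rule finite_subset)
  show "adjacent_cells n \<subseteq> ({1..n} \<times> {1..n}) \<times> ({1..n} \<times> {1..n})"
    unfolding adjacent_cells_def by auto
qed simp

lemma adjacent_cellsD:
  "((i, j), (i', j')) \<in> adjacent_cells n \<Longrightarrow> i \<in> {1..n} \<and> j \<in> {1..n} \<and> i' \<in> {1..n} \<and> j' \<in> {1..n}"
  unfolding adjacent_cells_def by auto

lemma inner_distance_le:
  assumes "((i, j), (i', j')) \<in> adjacent_cells n"
  shows "inner_distance n L \<le> cdist n (L i j) (L i' j')"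
  unfolding inner_distance_def using finite_adjacent_cells
  by (intro Min_le) (auto intro: rev_image_eqI[OF assms])

lemma inner_distance_attained:
  assumes "n \<ge> 2"
  obtains i j i' j' where "((i, j), (i', j')) \<in> adjacent_cells n"
    "cdist n (L i j) (L i' j') = inner_distance n L"
proof -
  have "((1, 1), (1, 2)) \<in> adjacent_cells n" using assms unfolding adjacent_cells_def by auto
  then have "inner_distance n L \<in> (\<lambda>((i, j), (i', j')). cdist n (L i j) (L i' j')) ` adjacent_cells n"
    unfolding inner_distance_def using finite_adjacent_cells by (intro Min_in) auto
  then show ?thesis using that by auto
qed

lemma inner_distance_eqI:
  assumes "((i, j), (i', j')) \<in> adjacent_cells n" "cdist n (L i j) (L i' j') = k"
    and "\<And>i j i' j'. ((i, j), (i', j')) \<in> adjacent_cells n \<Longrightarrow> k \<le> cdist n (L i j) (L i' j')"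
  shows "inner_distance n L = k"
  unfolding inner_distance_def using assms(2,3) finite_adjacent_cells
  by (intro Min_eqI) (auto intro: rev_image_eqI[OF assms(1)])

lemma inner_distance_le_half:
  assumes "n \<ge> 2"
  shows "2 * inner_distance n L \<le> n"
proof -
  obtain i j i' j' where "inner_distance n L = cdist n (L i j) (L i' j')"
    using inner_distance_attained[OF assms] by metis
  also have "2 * \<dots> \<le> n" using cdist_le_half assms by simp
  finally show ?thesis .
qed

lemma latin_square_in_range:
  "latin_square n L \<Longrightarrow> i \<in> {1..n} \<Longrightarrow> j \<in> {1..n} \<Longrightarrow> L i j \<in> {1..n}"
  unfolding latin_square_def bij_betw_def by blast

lemma perm_square_apply:
  "i \<in> {1..n} \<Longrightarrow> j \<in> {1..n} \<Longrightarrow> perm_square n \<sigma> L i j = \<sigma> (L i j)"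
  unfolding perm_square_def by simp

lemma exists_perm_square_inner_distance:
  assumes n: "n \<ge> 2" and L: "\<And>i j. i \<in> {1..n} \<Longrightarrow> j \<in> {1..n} \<Longrightarrow> L i j \<in> {1..n}"
    and k: "1 \<le> k" "k \<le> inner_distance n L"
  obtains \<sigma> where "\<sigma> permutes {1..n}" "inner_distance n (perm_square n \<sigma> L) = k"
proof -
  obtain i j i' j' where adj: "((i, j), (i', j')) \<in> adjacent_cells n"
    and M: "cdist n (L i j) (L i' j') = inner_distance n L"
    using inner_distance_attained[OF n] by metis
  define a b where "a = L i j" and "b = L i' j'"
  have "n > 0" using n by simp
  obtain v where v: "v \<in> {1..n}" "cdist n a v = inner_distance n L - k" "cdist n v b = k"
    using cdist_intermediate_point[OF \<open>n > 0\<close>, of k a b] M k unfolding a_def b_def by metis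
  define \<sigma> where "\<sigma> = transpose a v"
  have "a \<in> {1..n}" unfolding a_def using L adjacent_cellsD[OF adj] by blast
  then have "\<sigma> permutes {1..n}" unfolding \<sigma>_def using permutes_swap_id v(1) by metis
  moreover have "inner_distance n (perm_square n \<sigma> L) = k"
  proof (rule inner_distance_eqI[OF adj])
    have "0 < cdist n a b" "0 < cdist n v b" using M v(3) k unfolding a_def b_def by simp_all
    then have "b \<noteq> a" "b \<noteq> v" by (auto simp: cdist_self)
    then show "cdist n (perm_square n \<sigma> L i j) (perm_square n \<sigma> L i' j') = k"
      using adjacent_cellsD[OF adj] v(3) by (simp add: perm_square_apply \<sigma>_def flip: a_def b_def)
  next
    fix p q p' q' assume adj': "((p, q), (p', q')) \<in> adjacent_cells n"
    then have "cdist n a v + k \<le> cdist n (L p q) (L p' q')"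
      using inner_distance_le[OF adj'] v(2) k by simp
    then show "k \<le> cdist n (perm_square n \<sigma> L p q) (perm_square n \<sigma> L p' q')"
      using cdist_transpose_ge[OF \<open>n > 0\<close>] adjacent_cellsD[OF adj']
      by (simp add: perm_square_apply \<sigma>_def)
  qed
  ultimately show ?thesis using that by blast
qed

theorem mainTheorem3:
  fixes n :: nat and X :: "(nat \<Rightarrow> nat \<Rightarrow> nat) set"
  assumes "n \<ge> 5"
    and "X \<noteq> {}"
    and "\<forall>L\<in>X. latin_square n L"
    and "\<forall>L\<in>X. \<forall>\<sigma>. \<sigma> permutes {1..n} \<longrightarrow> perm_square n \<sigma> L \<in> X"
  shows "\<forall>k::nat. 1 \<le> k \<and> k \<le> Max (inner_distance n ` X) \<longrightarrow>
           (\<exists>L\<in>X. inner_distance n L = k)"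
proof (intro allI impI)
  fix k :: nat assume k: "1 \<le> k \<and> k \<le> Max (inner_distance n ` X)"
  have n: "n \<ge> 2" using assms(1) by simp
  have "finite (inner_distance n ` X)"
  proof (rule finite_subset)
    have "inner_distance n L \<le> n" for L using inner_distance_le_half[OF n, of L] by simp
    then show "inner_distance n ` X \<subseteq> {..n}" by auto
  qed simp
  then obtain L where L: "L \<in> X" "inner_distance n L = Max (inner_distance n ` X)"
    using Max_in assms(2) by (metis empty_is_image imageE)
  have latin: "latin_square n L" using assms(3) L(1) by blast
  have "1 \<le> k" "k \<le> inner_distance n L" using k L(2) by simp_all
  then obtain \<sigma> where "\<sigma> permutes {1..n}" "inner_distance n (perm_square n \<sigma> L) = k"
    using exists_perm_square_inner_distance[of n L, OF n latin_square_in_range[OF latin]] by blast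
  then show "\<exists>L\<in>X. inner_distance n L = k" using assms(4) L(1) by blast
qed

end
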